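(* Let $n\ge2$, let $P$ be a partial $n$-Metric on a set $X$, let $x_o,y_o\in X$ and let $f,g:X\to X$. Suppose there are real numbers $r$ and $0<c<1$ such that, with $M=\max\{|P(\langle f(x_o)\rangle^{n-1},y_o)|,|P(\langle x_o\rangle^{n-1},y_o)|\}$, for every natural number $i$: $$r\le\min\{P(\langle f^i(x_o)\rangle^n),P(\langle g^i(y_o)\rangle^n)\},\quad P(\langle f^{i+1}(x_o)\rangle^{n-1},g^i(y_o))\le r+c^iM,\quad P(\langle f^{i}(x_o)\rangle^{n-1},g^i(y_o))\le r+c^iM$$ (i.e. $f$ and $g$ are $f$-pairwise $c_r$-contractive over $(x_o,y_o)$). Then $\{f^i(x_o)\}_{i\in\mathbb{N}}$ and $\{g^i(y_o)\}_{i\in\mathbb{N}}$ form a Cauchy pair.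
   Context: Notation: $\langle a\rangle^k$ denotes the $k$-tuple $(a,\dots,a)$ inserted into an argument list; $f^0(x)=x$, $f^{i+1}(x)=f(f^i(x))$. A partial $n$-Metric on $X$ is a function $P:X^n\to\mathbb{R}$ such that for all $x_1,\dots,x_n,a\in X$: (1) $P(\langle x_1\rangle^n)\le P(\langle x_1\rangle^{n-1},x_2)$; (2) $P$ is invariant under permutations of its arguments; (3) $P(\langle x_1\rangle^{n-1},x_2)=P(\langle x_1\rangle^n)$ and $P(\langle x_2\rangle^{n-1},x_1)=P(\langle x_2\rangle^n)$ iff $x_1=x_2$; (4) $P(x_1,\dots,x_n)\le P(x_1,\dots,x_{n-1},a)+P(\langle a\rangle^{n-1},x_n)-P(\langle a\rangle^n)$. Two sequences $\{x_i\},\{y_i\}$ form a Cauchy pair if there is $r'\in\mathbb{R}$ such that for every $\epsilon>0$ there is $N$ with $r'-\epsilon<\min\{P(\langle x_i\rangle^n),P(\langle y_i\rangle^n)\}\le P(\langle x_i\rangle^{n-1},y_j)<r'+\epsilon$ for all $i,j>N$. *)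

theory Defs
  imports Complex_Main "HOL-Library.Multiset"
begin

text \<open>An n-tuple of elements of X is represented as a list of length n;
  the tuple (a,...,a) of length k is replicate k a.\<close>

definition partial_n_metric :: "nat \<Rightarrow> 'a set \<Rightarrow> ('a list \<Rightarrow> real) \<Rightarrow> bool" where
  "partial_n_metric n X P \<longleftrightarrow>
     (\<forall>x1\<in>X. \<forall>x2\<in>X. P (replicate n x1) \<le> P (replicate (n - 1) x1 @ [x2])) \<and>
     (\<forall>xs ys. length xs = n \<and> set xs \<subseteq> X \<and> mset ys = mset xs \<longrightarrow> P xs = P ys) \<and>
     (\<forall>x1\<in>X. \<forall>x2\<in>X.
        (P (replicate (n - 1) x1 @ [x2]) = P (replicate n x1) \<and>
         P (replicate (n - 1) x2 @ [x1]) = P (replicate n x2)) \<longleftrightarrow> x1 = x2) \<and>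
     (\<forall>xs a. length xs = n \<and> set xs \<subseteq> X \<and> a \<in> X \<longrightarrow>
        P xs \<le> P (butlast xs @ [a]) + P (replicate (n - 1) a @ [last xs]) - P (replicate n a))"

definition cauchy_pair :: "nat \<Rightarrow> ('a list \<Rightarrow> real) \<Rightarrow> (nat \<Rightarrow> 'a) \<Rightarrow> (nat \<Rightarrow> 'a) \<Rightarrow> bool" where
  "cauchy_pair n P x y \<longleftrightarrow>
     (\<exists>r'::real. \<forall>\<epsilon>>0. \<exists>N::nat. \<forall>i j. i > N \<and> j > N \<longrightarrow>
        r' - \<epsilon> < min (P (replicate n (x i))) (P (replicate n (y i))) \<and>
        min (P (replicate n (x i))) (P (replicate n (y i))) \<le> P (replicate (n - 1) (x i) @ [y j]) \<and>
        P (replicate (n - 1) (x i) @ [y j]) < r' + \<epsilon>)"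

end

theory Submission
  imports Defs
begin

text \<open>Let D u v = P(u,...,u,v) - r be the excess of P over the common lower bound r of the
  self-distances along both orbits. The fourth axiom gives D the triangle inequality through any
  point of self-distance at least r, and exchanging the repeated entry one position at a time
  gives D u v \<le> n D v u. So consecutive points of either orbit are at excess O(c^i), and
  walking from f^i(x_o) to g^j(y_o) along one orbit sums a geometric tail: the excess is
  O(c^min(i,j)), so all mixed distances converge to r.\<close>

lemma partial_n_metric_permute:
  assumes "partial_n_metric n X P" "length xs = n" "set xs \<subseteq> X" "mset ys = mset xs"
  shows "P xs = P ys"
  using assms unfolding partial_n_metric_def by blast

lemma partial_n_metric_replace_last:
  assumes "partial_n_metric n X P" "length xs = n" "set xs \<subseteq> X" "a \<in> X"
  shows "P xs \<le> P (butlast xs @ [a]) + P (replicate (n - 1) a @ [last xs]) - P (replicate n a)"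
  using assms unfolding partial_n_metric_def by blast

lemma partial_n_metric_self_le:
  assumes "partial_n_metric n X P" "x \<in> X" "y \<in> X"
  shows "P (replicate n x) \<le> P (replicate (n - 1) x @ [y])"
  using assms unfolding partial_n_metric_def by blast

lemma partial_n_metric_excess_triangle:
  assumes "partial_n_metric n X P" "n \<ge> 1" "x \<in> X" "y \<in> X" "z \<in> X" "r \<le> P (replicate n z)"
  shows "P (replicate (n - 1) x @ [y]) - r
    \<le> (P (replicate (n - 1) x @ [z]) - r) + (P (replicate (n - 1) z @ [y]) - r)"
proof -
  have "set (replicate (n - 1) x) \<subseteq> X"
    using assms(3) by auto
  then show ?thesis
    using partial_n_metric_replace_last[OF assms(1), of "replicate (n - 1) x @ [y]" z] assms
    by simp
qed

lemma partial_n_metric_mixed_le: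
  assumes "partial_n_metric n X P" "x \<in> X" "y \<in> X" "k \<le> n - 1"
  shows "P (replicate k x @ replicate (n - k) y)
    \<le> P (replicate n y) + real k * (P (replicate (n - 1) y @ [x]) - P (replicate n y))"
  using assms(4)
proof (induction k)
  case 0
  then show ?case by simp
next
  case (Suc k)
  define xs where "xs = replicate k x @ replicate (n - Suc k) y @ [x]"
  have len: "length xs = n" and set_xs: "set xs \<subseteq> X"
    using Suc.prems assms(2,3) unfolding xs_def by auto
  have "n - k = Suc (n - Suc k)"
    using Suc.prems by simp
  then have "butlast xs @ [y] = replicate k x @ replicate (n - k) y"
    unfolding xs_def by (simp add: butlast_append replicate_append_same)
  then have "P xs \<le> P (replicate k x @ replicate (n - k) y)
      + P (replicate (n - 1) y @ [x]) - P (replicate n y)"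
    using partial_n_metric_replace_last[OF assms(1) len set_xs assms(3)] by (simp add: xs_def)
  moreover have "P xs = P (replicate (Suc k) x @ replicate (n - Suc k) y)"
    by (rule partial_n_metric_permute[OF assms(1) len set_xs]) (simp add: xs_def)
  ultimately show ?case
    using Suc by (simp add: distrib_right)
qed

text \<open>Needs \<open>n \<ge> 2\<close>: the factor \<open>n - 1\<close> produced by the swap is enlarged to \<open>n\<close> so that the
  self-distance of \<open>y\<close> can be replaced by its lower bound \<open>r\<close>.\<close>

lemma partial_n_metric_swap_excess:
  assumes "partial_n_metric n X P" "n \<ge> 2" "x \<in> X" "y \<in> X" "r \<le> P (replicate n y)"
  shows "P (replicate (n - 1) x @ [y]) - r \<le> real n * (P (replicate (n - 1) y @ [x]) - r)"
proof -
  define s where "s = P (replicate n y)"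
  define t where "t = P (replicate (n - 1) y @ [x])"
  have "P (replicate (n - 1) x @ [y]) \<le> s + real (n - 1) * (t - s)"
    using partial_n_metric_mixed_le[OF assms(1,3,4), of "n - 1"] assms(2)
    by (simp add: s_def t_def)
  moreover have "s \<le> t"
    unfolding s_def t_def by (rule partial_n_metric_self_le[OF assms(1,4,3)])
  moreover have "r \<le> s" "(real n - 2) * (s - r) \<ge> 0"
    using assms(2,5) by (simp_all add: s_def)
  ultimately show ?thesis
    using assms(2) by (simp add: of_nat_diff algebra_simps t_def)
qed

lemma geometric_accumulation:
  fixes Q :: "nat \<Rightarrow> real"
  assumes "0 < c" "c < 1" "C \<ge> 0" "Q 0 \<le> B" "\<And>d. Q (Suc d) \<le> Q d + C * c ^ (m + d)"
  shows "Q d \<le> B + C * c ^ m / (1 - c)"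
proof -
  have "Q d \<le> B + C * ((c ^ m - c ^ (m + d)) / (1 - c))"
  proof (induction d)
    case 0
    then show ?case using assms(4) by simp
  next
    case (Suc d)
    have "(c ^ m - c ^ (m + Suc d)) / (1 - c) = (c ^ m - c ^ (m + d)) / (1 - c) + c ^ (m + d)"
      using assms(2) by (simp add: field_simps)
    then show ?case
      using Suc assms(5)[of d] by (simp add: algebra_simps)
  qed
  also have "\<dots> \<le> B + C * c ^ m / (1 - c)"
    using assms(1-3) by (simp add: mult_left_mono divide_right_mono)
  finally show ?thesis .
qed

lemma excess_bound_of_pairwise_contractive:
  fixes D :: "'a \<Rightarrow> 'a \<Rightarrow> real" and a b :: "nat \<Rightarrow> 'a"
  defines "S \<equiv> range a \<union> range b"
  assumes triangle: "\<And>u v z. u \<in> S \<Longrightarrow> v \<in> S \<Longrightarrow> z \<in> S \<Longrightarrow> D u v \<le> D u z + D z v"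
    and swap: "\<And>u v. u \<in> S \<Longrightarrow> v \<in> S \<Longrightarrow> D u v \<le> q * D v u"
    and "q \<ge> 0" "0 < c" "c < 1" "M \<ge> 0"
    and shifted: "\<And>i. D (a (Suc i)) (b i) \<le> c ^ i * M"
    and diagonal: "\<And>i. D (a i) (b i) \<le> c ^ i * M"
  shows "D (a i) (b j) \<le> c ^ min i j * (M + (q + 1) * M / (1 - c))"
proof -
  have in_S [simp]: "a i \<in> S" "b i \<in> S" for i
    unfolding S_def by auto
  have swap_bound: "q * D v u \<le> q * (c ^ k * M)" if "D v u \<le> c ^ k * M" for u v k
    using that \<open>q \<ge> 0\<close> by (rule mult_left_mono)
  have "c ^ Suc k * M \<le> c ^ k * M" for k
    using \<open>0 < c\<close> \<open>c < 1\<close> \<open>M \<ge> 0\<close> by (simp add: mult_right_mono power_decreasing)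
  then have diagonal_Suc: "D (a (Suc k)) (b (Suc k)) \<le> c ^ k * M" for k
    using diagonal[of "Suc k"] by (meson order_trans)
  have b_step: "D (b k) (b (Suc k)) \<le> (q + 1) * M * c ^ k" for k
    using triangle[of "b k" "b (Suc k)" "a (Suc k)"] swap[of "b k" "a (Suc k)"]
      swap_bound[OF shifted[of k]] diagonal_Suc[of k]
    by (simp add: algebra_simps)
  have a_step: "D (a (Suc k)) (a k) \<le> (q + 1) * M * c ^ k" for k
    using triangle[of "a (Suc k)" "a k" "b k"] swap[of "b k" "a k"] shifted[of k]
      swap_bound[OF diagonal[of k]]
    by (simp add: algebra_simps)
  have C: "(q + 1) * M \<ge> 0"
    using \<open>q \<ge> 0\<close> \<open>M \<ge> 0\<close> by simp
  have b_later: "D (a i) (b (i + d)) \<le> c ^ i * M + (q + 1) * M * c ^ i / (1 - c)" for i d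
  proof (rule geometric_accumulation[OF \<open>0 < c\<close> \<open>c < 1\<close> C,
        where Q = "\<lambda>d. D (a i) (b (i + d))" and m = i])
    show "D (a i) (b (i + 0)) \<le> c ^ i * M"
      using diagonal by simp
    show "D (a i) (b (i + Suc d)) \<le> D (a i) (b (i + d)) + (q + 1) * M * c ^ (i + d)" for d
      using triangle[of "a i" "b (i + Suc d)" "b (i + d)"] b_step[of "i + d"] by simp
  qed
  have a_later: "D (a (j + d)) (b j) \<le> c ^ j * M + (q + 1) * M * c ^ j / (1 - c)" for j d
  proof (rule geometric_accumulation[OF \<open>0 < c\<close> \<open>c < 1\<close> C,
        where Q = "\<lambda>d. D (a (j + d)) (b j)" and m = j])
    show "D (a (j + 0)) (b j) \<le> c ^ j * M"
      using diagonal by simp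
    show "D (a (j + Suc d)) (b j) \<le> D (a (j + d)) (b j) + (q + 1) * M * c ^ (j + d)" for d
      using triangle[of "a (j + Suc d)" "b j" "a (j + d)"] a_step[of "j + d"] by simp
  qed
  have factor: "c ^ m * M + (q + 1) * M * c ^ m / (1 - c) = c ^ m * (M + (q + 1) * M / (1 - c))"
    for m :: nat
    by (simp add: algebra_simps)
  show ?thesis
  proof (cases "i \<le> j")
    case True
    then show ?thesis
      using b_later[of i "j - i"] factor[of i] by simp
  next
    case False
    then show ?thesis
      using a_later[of j "i - j"] factor[of j] by simp
  qed
qed

lemma cauchy_pairI_geometric:
  assumes "partial_n_metric n X P" "\<And>i. x i \<in> X" "\<And>i. y i \<in> X" "0 < c" "c < 1"
    and lower: "\<And>i. r \<le> min (P (replicate n (x i))) (P (replicate n (y i)))"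
    and upper: "\<And>i j. P (replicate (n - 1) (x i) @ [y j]) - r \<le> c ^ min i j * K"
  shows "cauchy_pair n P x y"
  unfolding cauchy_pair_def
proof (intro exI[of _ r] allI impI)
  fix e :: real assume "e > 0"
  have "(\<lambda>m. c ^ m * K) \<longlonglongrightarrow> 0"
    using \<open>0 < c\<close> \<open>c < 1\<close> by (intro tendsto_mult_left_zero LIMSEQ_power_zero) simp
  then have "eventually (\<lambda>m. c ^ m * K < e) sequentially"
    using \<open>e > 0\<close> by (rule order_tendstoD(2))
  then obtain N where N: "\<And>m. m \<ge> N \<Longrightarrow> c ^ m * K < e"
    by (auto simp: eventually_sequentially)
  show "\<exists>N. \<forall>i j. N < i \<and> N < j \<longrightarrow>
      r - e < min (P (replicate n (x i))) (P (replicate n (y i))) \<and>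
      min (P (replicate n (x i))) (P (replicate n (y i))) \<le> P (replicate (n - 1) (x i) @ [y j]) \<and>
      P (replicate (n - 1) (x i) @ [y j]) < r + e"
  proof (intro exI[of _ N] allI impI conjI)
    fix i j assume "N < i \<and> N < j"
    then show "P (replicate (n - 1) (x i) @ [y j]) < r + e"
      using upper[of i j] N[of "min i j"] by simp
    show "r - e < min (P (replicate n (x i))) (P (replicate n (y i)))"
      using lower[of i] \<open>e > 0\<close> by linarith
    show "min (P (replicate n (x i))) (P (replicate n (y i))) \<le> P (replicate (n - 1) (x i) @ [y j])"
      using partial_n_metric_self_le[OF assms(1,2,3)] by (meson min.coboundedI1)
  qed
qed

theorem theorem5p13:
  fixes n :: nat and X :: "'a set" and P :: "'a list \<Rightarrow> real"
    and f g :: "'a \<Rightarrow> 'a" and xo yo :: 'a and r c M :: real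
  assumes "n \<ge> 2"
    and "partial_n_metric n X P"
    and "xo \<in> X" and "yo \<in> X"
    and "\<forall>x\<in>X. f x \<in> X" and "\<forall>x\<in>X. g x \<in> X"
    and "0 < c" and "c < 1"
    and "M = max \<bar>P (replicate (n - 1) (f xo) @ [yo])\<bar> \<bar>P (replicate (n - 1) xo @ [yo])\<bar>"
    and "\<forall>i::nat. r \<le> min (P (replicate n ((f ^^ i) xo))) (P (replicate n ((g ^^ i) yo)))"
    and "\<forall>i::nat. P (replicate (n - 1) ((f ^^ Suc i) xo) @ [(g ^^ i) yo]) \<le> r + c ^ i * M"
    and "\<forall>i::nat. P (replicate (n - 1) ((f ^^ i) xo) @ [(g ^^ i) yo]) \<le> r + c ^ i * M"
  shows "cauchy_pair n P (\<lambda>i. (f ^^ i) xo) (\<lambda>i. (g ^^ i) yo)"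
proof -
  define a where "a = (\<lambda>i. (f ^^ i) xo)"
  define b where "b = (\<lambda>i. (g ^^ i) yo)"
  have a_in_X: "a i \<in> X" and b_in_X: "b i \<in> X" for i
    unfolding a_def b_def by (induction i) (use assms(3-6) in auto)
  then have in_X: "v \<in> X" if "v \<in> range a \<union> range b" for v
    using that by auto
  have above_r: "r \<le> P (replicate n v)" if "v \<in> range a \<union> range b" for v
    using that assms(10) unfolding a_def b_def by (auto simp: min_le_iff_disj)
  have "M \<ge> 0"
    unfolding assms(9) by simp
  have shifted: "P (replicate (n - 1) (a (Suc i)) @ [b i]) - r \<le> c ^ i * M" for i
    using assms(11) unfolding a_def b_def by (simp add: algebra_simps)
  have diagonal: "P (replicate (n - 1) (a i) @ [b i]) - r \<le> c ^ i * M" for i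
    using assms(12) unfolding a_def b_def by (simp add: algebra_simps)
  have "P (replicate (n - 1) (a i) @ [b j]) - r
      \<le> c ^ min i j * (M + (real n + 1) * M / (1 - c))" for i j
  proof (rule excess_bound_of_pairwise_contractive[OF _ _ _ \<open>0 < c\<close> \<open>c < 1\<close> \<open>M \<ge> 0\<close>,
        where D = "\<lambda>u v. P (replicate (n - 1) u @ [v]) - r" and a = a and b = b and q = "real n"])
    fix u v z assume "u \<in> range a \<union> range b" "v \<in> range a \<union> range b" "z \<in> range a \<union> range b"
    then show "P (replicate (n - 1) u @ [v]) - r
        \<le> P (replicate (n - 1) u @ [z]) - r + (P (replicate (n - 1) z @ [v]) - r)"
      using assms(1) by (intro partial_n_metric_excess_triangle[OF assms(2)] in_X above_r) auto
  next
    fix u v assume "u \<in> range a \<union> range b" "v \<in> range a \<union> range b"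
    then show "P (replicate (n - 1) u @ [v]) - r \<le> real n * (P (replicate (n - 1) v @ [u]) - r)"
      by (intro partial_n_metric_swap_excess[OF assms(2,1)] in_X above_r)
  qed (simp, fact shifted, fact diagonal)
  then have "cauchy_pair n P a b"
    using assms(10) by (intro cauchy_pairI_geometric[OF assms(2) a_in_X b_in_X \<open>0 < c\<close> \<open>c < 1\<close>])
      (auto simp: a_def b_def)
  then show ?thesis
    by (simp only: a_def b_def)
qed

end
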